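(* Assume $\hat\beta_N\to\hat\beta\in(0,\infty)$ and work under the coupling described in the context. For every $\delta>0$ and $k\in\mathbb{N}$ there exists $N_k$ such that for all $N>N_k$, $\mathbb{P}\big(A^{(k)}_{\hat\beta_N,N}=A^{(k)}_{\hat\beta,\infty}\big)>1-\delta$.
   Context: Disorder: for $N\in\mathbb{N}$, $M^{(N)}_i=b_N^{-1}\times$($i$-th largest of $\omega_1,\dots,\omega_{N-1}$) and $Y^{(N)}_i=n_i/N$ with $\omega_{n_i}$ that value, for $i\le N-1$, and $(M^{(N)}_i,Y^{(N)}_i)=(0,0)$ for $i\ge N$; here $(\omega_n)$ are i.i.d. positive atomless with $\mathbb{P}(\omega_1>t)\sim L_0(t)t^{-\alpha}$, $\alpha\in(0,1)$, and $\mathbb{P}(\omega_1>b_N)\sim1/N$. Continuum: $M^{(\infty)}_i=T_i^{-1/\alpha}$ ($T_i$ sum of $i$ i.i.d. Exp(1)), $Y^{(\infty)}_i$ i.i.d. Uniform$[0,1]$ independent. Coupling: all $w^{(N)}=(M^{(N)}_i,Y^{(N)}_i)_{i\ge1}$, $N\in\mathbb{N}\cup\{\infty\}$, are defined on one probability space $\mathbb{P}$ (each with its correct law) so that a.s. $M^{(N)}_i\to M^{(\infty)}_i$ and $Y^{(N)}_i\to Y^{(\infty)}_i$ for every $i$. Entropy: $\gamma\in(0,1)$, for finite $I=\{0=x_0<\dots<x_\ell=1\}\subset[0,1]$, $E(I)=\sum(x_i-x_{i-1})^\gamma$. For $A\subset\{1,\dots,k\}$ let $Y^{(N)}_A=\{Y^{(N)}_i:i\in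 A\}\cup\{0,1\}$. For $\beta>0$, $A^{(k)}_{\beta,N}$ is the (a.s. unique) $A\subset\{1,\dots,(N-1)\wedge k\}$ maximizing $\beta\sum_{i\in A}M^{(N)}_i-E(Y^{(N)}_A)$; equivalently $Y^{(N)}_{A^{(k)}_{\beta,N}}$ is the unique maximizer over closed $I\ni0,1$ of $\beta\sum_{i\le (N-1)\wedge k}M^{(N)}_i\mathbf 1(Y^{(N)}_i\in I)-\bar E(I)$, $\bar E$ being the lower semicontinuous extension of $E$. *)

theory Defs
  imports "HOL-Probability.Probability" "HOL-Library.Landau_Symbols"
begin

definition slowly_varying :: "(real \<Rightarrow> real) \<Rightarrow> bool" where
  "slowly_varying L \<longleftrightarrow> (\<forall>t>0. L t > 0) \<and>
     (\<forall>c>0. ((\<lambda>t. L (c * t) / L t) \<longlongrightarrow> 1) at_top)"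

(* 0-based rank of omega_n among omega_1..omega_{N-1} (descending, ties broken by index) *)
definition disorder_rank :: "nat \<Rightarrow> (nat \<Rightarrow> real) \<Rightarrow> nat \<Rightarrow> nat" where
  "disorder_rank N \<omega> n =
     card {m \<in> {1..N-1}. \<omega> m > \<omega> n \<or> (\<omega> m = \<omega> n \<and> m < n)}"

(* index n_i of the i-th largest among omega_1..omega_{N-1}, for 1 <= i <= N-1 *)
definition disorder_idx :: "nat \<Rightarrow> (nat \<Rightarrow> real) \<Rightarrow> nat \<Rightarrow> nat" where
  "disorder_idx N \<omega> i = (THE n. n \<in> {1..N-1} \<and> disorder_rank N \<omega> n = i - 1)"

(* the configuration w^(N) = (M^(N)_i, Y^(N)_i) as a function of the disorder omega,
   at index i >= 1 *)
definition disorder_config :: "(nat \<Rightarrow> real) \<Rightarrow> nat \<Rightarrow> (nat \<Rightarrow> real) \<Rightarrow> nat \<Rightarrow> real \<times> real" where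
  "disorder_config b N \<omega> i =
     (if 1 \<le> i \<and> i \<le> N - 1
      then (\<omega> (disorder_idx N \<omega> i) / b N, real (disorder_idx N \<omega> i) / real N)
      else (0, 0))"

(* the continuum configuration: T_i = E_1 + ... + E_i, M_i = T_i^(-1/alpha), Y_i = U_i, i >= 1 *)
definition continuum_config :: "real \<Rightarrow> (nat \<Rightarrow> real) \<times> (nat \<Rightarrow> real) \<Rightarrow> nat \<Rightarrow> real \<times> real" where
  "continuum_config \<alpha> eu i =
     ((\<Sum>j\<in>{1..i}. fst eu j) powr (-1 / \<alpha>), snd eu i)"

definition exp1_law :: "real measure" where
  "exp1_law = density lborel (exponential_density 1)"

definition unif01_law :: "real measure" where
  "unif01_law = uniform_measure lborel {0..1}"

definition entropy :: "real \<Rightarrow> real set \<Rightarrow> real" where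
  "entropy \<gamma> I = (let xs = sorted_list_of_set I in
      (\<Sum>j < length xs - 1. (xs ! (j + 1) - xs ! j) powr \<gamma>))"

definition energy_obj :: "real \<Rightarrow> real \<Rightarrow> (nat \<Rightarrow> real) \<Rightarrow> (nat \<Rightarrow> real) \<Rightarrow> nat set \<Rightarrow> real" where
  "energy_obj \<gamma> \<beta> M Y A = \<beta> * (\<Sum>i\<in>A. M i) - entropy \<gamma> (Y ` A \<union> {0, 1})"

definition unique_maximizer :: "real \<Rightarrow> real \<Rightarrow> nat \<Rightarrow> (nat \<Rightarrow> real) \<Rightarrow> (nat \<Rightarrow> real) \<Rightarrow> nat set \<Rightarrow> bool" where
  "unique_maximizer \<gamma> \<beta> n M Y A \<longleftrightarrow> A \<subseteq> {1..n} \<and>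
     (\<forall>B. B \<subseteq> {1..n} \<and> B \<noteq> A \<longrightarrow> energy_obj \<gamma> \<beta> M Y B < energy_obj \<gamma> \<beta> M Y A)"

end

theory Submission
  imports Defs
begin

(* Fix k.  For the continuum configuration, almost surely the first k points are
   "nondegenerate": their positions Y_1..Y_k are distinct and different from 0 and 1, and the
   2^k values of the objective beta * sum_{i in A} M_i - E(Y_A), A a subset of {1..k}, are pairwise
   distinct.  On a nondegenerate configuration the objective of every fixed A is continuous in
   (beta, M, Y) (the entropy of a finite point set depends continuously on the points as long as
   they stay distinct), so the strict optimality of the unique maximizer persists under small
   perturbations.  By the coupling, for almost every sample point the finite-N maximizer therefore
   eventually coincides with the continuum one, and almost sure eventual agreement forces the
   probability of agreement to tend to 1. *)

definition gap_to_next :: "real \<Rightarrow> real set \<Rightarrow> real \<Rightarrow> real" where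
  "gap_to_next \<gamma> S s = (if \<exists>t\<in>S. s < t then (Min {t\<in>S. s < t} - s) powr \<gamma> else 0)"

lemma sorted_list_gap_sum:
  assumes "sorted_wrt (<) xs"
  shows "(\<Sum>j < length xs - 1. (xs ! (j + 1) - xs ! j) powr \<gamma>)
       = (\<Sum>s\<in>set xs. gap_to_next \<gamma> (set xs) s)"
  using assms
proof (induction xs)
  case Nil
  then show ?case by simp
next
  case (Cons x ys)
  have x_least: "\<forall>y\<in>set ys. x < y" and sorted_ys: "sorted_wrt (<) ys"
    using Cons.prems by auto
  have gaps_ys: "(\<Sum>s\<in>set ys. gap_to_next \<gamma> (insert x (set ys)) s)
               = (\<Sum>s\<in>set ys. gap_to_next \<gamma> (set ys) s)"
  proof (rule sum.cong[OF refl])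
    fix s assume "s \<in> set ys"
    then have "{t\<in>insert x (set ys). s < t} = {t\<in>set ys. s < t}" using x_least by auto
    then show "gap_to_next \<gamma> (insert x (set ys)) s = gap_to_next \<gamma> (set ys) s"
      unfolding gap_to_next_def by (metis (no_types, lifting) mem_Collect_eq)
  qed
  show ?case
  proof (cases ys)
    case Nil
    then show ?thesis by (simp add: gap_to_next_def)
  next
    case (Cons y zs)
    have "Min (set ys) = y"
      using sorted_ys Cons by (auto intro!: Min_eqI simp: less_imp_le)
    moreover have "{t\<in>insert x (set ys). x < t} = set ys" using x_least by auto
    ultimately have gap_x: "gap_to_next \<gamma> (insert x (set ys)) x = (y - x) powr \<gamma>"
      unfolding gap_to_next_def using Cons by auto
    have "(\<Sum>j < length (x # ys) - 1. ((x # ys) ! (j + 1) - (x # ys) ! j) powr \<gamma>)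
        = (\<Sum>j < Suc (length ys - 1). ((x # ys) ! (j + 1) - (x # ys) ! j) powr \<gamma>)"
      using Cons by simp
    also have "\<dots> = (y - x) powr \<gamma> + (\<Sum>j < length ys - 1. (ys ! (j + 1) - ys ! j) powr \<gamma>)"
      by (subst sum.lessThan_Suc_shift) (simp add: Cons)
    also have "\<dots> = (y - x) powr \<gamma> + (\<Sum>s\<in>set ys. gap_to_next \<gamma> (set ys) s)"
      using Cons.IH sorted_ys by simp
    also have "\<dots> = (\<Sum>s\<in>set (x # ys). gap_to_next \<gamma> (set (x # ys)) s)"
      using x_least gap_x gaps_ys by auto
    finally show ?thesis .
  qed
qed

lemma entropy_eq_sum_gaps:
  assumes "finite S"
  shows "entropy \<gamma> S = (\<Sum>s\<in>S. gap_to_next \<gamma> S s)"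
  unfolding entropy_def Let_def
  using sorted_list_gap_sum[OF strict_sorted_list_of_set[of S], of \<gamma>] assms by simp

lemma sum_over_image:
  fixes h :: "'b \<Rightarrow> real"
  assumes "finite J"
  shows "(\<Sum>s\<in>f ` J. h s) = (\<Sum>j\<in>J. h (f j) / real (card {t\<in>J. f t = f j}))"
proof -
  have "(\<Sum>j\<in>J. h (f j) / real (card {t\<in>J. f t = f j}))
     = (\<Sum>y\<in>f ` J. \<Sum>j\<in>{x\<in>J. f x = y}. h (f j) / real (card {t\<in>J. f t = f j}))"
    using assms by (rule sum.image_gen)
  also have "\<dots> = (\<Sum>y\<in>f ` J. h y)"
  proof (rule sum.cong[OF refl])
    fix y assume y: "y \<in> f ` J"
    have "(\<Sum>j\<in>{x\<in>J. f x = y}. h (f j) / real (card {t\<in>J. f t = f j}))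
        = (\<Sum>j\<in>{x\<in>J. f x = y}. h y / real (card {t\<in>J. f t = y}))"
      by (rule sum.cong) auto
    also have "\<dots> = h y" using y assms by (auto simp: card_eq_0_iff)
    finally show "(\<Sum>j\<in>{x\<in>J. f x = y}. h (f j) / real (card {t\<in>J. f t = f j})) = h y" .
  qed
  finally show ?thesis by simp
qed

(* Closed form for the gap to the next point of an image f ` J, built only from Max, Min and
   comparisons, hence manifestly measurable in the points f j. *)
lemma gap_to_next_image:
  fixes f :: "'b \<Rightarrow> real"
  assumes J: "finite J" "J \<noteq> {}"
  shows "gap_to_next \<gamma> (f ` J) a = (if a < (MAX s\<in>J. f s)
      then ((MIN t\<in>J. if a < f t then f t else (MAX s\<in>J. f s)) - a) powr \<gamma> else 0)"
proof (cases "a < (MAX s\<in>J. f s)")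
  case True
  let ?m = "MAX s\<in>J. f s"
  have "?m \<in> f ` J" using J by (intro Max_in) auto
  then have "(\<lambda>t. if a < f t then f t else ?m) ` J = {t\<in>f ` J. a < t}"
    using True by (auto simp: image_iff)
  then show ?thesis
    using True J by (auto simp: gap_to_next_def Max_gr_iff)
next
  case False
  then show ?thesis using J by (auto simp: gap_to_next_def Max_gr_iff)
qed

lemma entropy_image_measurable:
  fixes F :: "'b \<Rightarrow> 'a \<Rightarrow> real"
  assumes J: "finite J" and F: "\<And>j. j \<in> J \<Longrightarrow> F j \<in> borel_measurable M"
  shows "(\<lambda>x. entropy \<gamma> ((\<lambda>j. F j x) ` J)) \<in> borel_measurable M"
proof (cases "J = {}")
  case True
  then show ?thesis by simp
next
  case False
  define top where "top x = (MAX s\<in>J. F s x)" for x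
  define gap where "gap j x = (if F j x < top x
      then ((MIN t\<in>J. if F j x < F t x then F t x else top x) - F j x) powr \<gamma> else 0)" for j x
  define mult where "mult j x = (\<Sum>t\<in>J. if F t x = F j x then 1 else (0::real))" for j x
  have "entropy \<gamma> ((\<lambda>j. F j x) ` J) = (\<Sum>j\<in>J. gap j x / mult j x)" for x
  proof -
    have "entropy \<gamma> ((\<lambda>j. F j x) ` J)
        = (\<Sum>j\<in>J. gap_to_next \<gamma> ((\<lambda>j. F j x) ` J) (F j x) / real (card {t\<in>J. F t x = F j x}))"
      using J by (simp add: entropy_eq_sum_gaps sum_over_image)
    also have "\<dots> = (\<Sum>j\<in>J. gap j x / mult j x)"
      using J False unfolding gap_def mult_def top_def
      by (intro sum.cong refl) (simp add: gap_to_next_image sum.If_cases Int_def)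
    finally show ?thesis .
  qed
  moreover have "(\<lambda>x. gap j x / mult j x) \<in> borel_measurable M" if j: "j \<in> J" for j
  proof -
    have top: "top \<in> borel_measurable M"
      unfolding top_def using J F by (rule borel_measurable_Max)
    have "(\<lambda>x. MIN t\<in>J. if F j x < F t x then F t x else top x) \<in> borel_measurable M"
      using J F j top by (intro borel_measurable_Min measurable_If borel_measurable_less) auto
    then have "gap j \<in> borel_measurable M"
      unfolding gap_def using F j top
      by (intro measurable_If powr_real_measurable borel_measurable_diff borel_measurable_less) auto
    moreover have "mult j \<in> borel_measurable M"
      unfolding mult_def using F j
      by (intro borel_measurable_sum measurable_If borel_measurable_eq) auto
    ultimately show ?thesis by (rule borel_measurable_divide)
  qed
  ultimately show ?thesis by simp
qed

lemma tendsto_MIN_finite: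
  fixes f :: "'b \<Rightarrow> 'c \<Rightarrow> real"
  assumes "finite I" "I \<noteq> {}" "\<And>i. i \<in> I \<Longrightarrow> ((\<lambda>x. f i x) \<longlongrightarrow> l i) F"
  shows "((\<lambda>x. MIN i\<in>I. f i x) \<longlongrightarrow> (MIN i\<in>I. l i)) F"
  using assms
proof (induction I rule: finite_ne_induct)
  case (singleton x)
  then show ?case by simp
next
  case (insert a I)
  then have "((\<lambda>x. min (f a x) (MIN i\<in>I. f i x)) \<longlongrightarrow> min (l a) (MIN i\<in>I. l i)) F"
    by (intro tendsto_min) auto
  then show ?case using insert by simp
qed

(* When the labelled points H j are distinct and ordered like G j, the entropy of H ` J can be
   written with the combinatorial data (who is next to whom) taken from G. *)
lemma entropy_image_by_order:
  fixes H G :: "'b \<Rightarrow> real"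
  assumes J: "finite J" and inj: "inj_on H J"
    and ord: "\<And>i j. i \<in> J \<Longrightarrow> j \<in> J \<Longrightarrow> H i < H j \<longleftrightarrow> G i < G j"
  shows "entropy \<gamma> (H ` J) = (\<Sum>j\<in>J. if \<exists>t\<in>J. G j < G t
      then ((MIN t\<in>{t\<in>J. G j < G t}. H t) - H j) powr \<gamma> else 0)"
proof -
  have "entropy \<gamma> (H ` J) = (\<Sum>j\<in>J. gap_to_next \<gamma> (H ` J) (H j))"
    using J inj by (simp add: entropy_eq_sum_gaps sum.reindex)
  also have "\<dots> = (\<Sum>j\<in>J. if \<exists>t\<in>J. G j < G t
      then ((MIN t\<in>{t\<in>J. G j < G t}. H t) - H j) powr \<gamma> else 0)"
  proof (rule sum.cong[OF refl])
    fix j assume j: "j \<in> J"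
    have "(\<exists>t\<in>H ` J. H j < t) \<longleftrightarrow> (\<exists>t\<in>J. G j < G t)"
      and "{t\<in>H ` J. H j < t} = H ` {t\<in>J. G j < G t}"
      using ord j by auto
    then show "gap_to_next \<gamma> (H ` J) (H j) = (if \<exists>t\<in>J. G j < G t
      then ((MIN t\<in>{t\<in>J. G j < G t}. H t) - H j) powr \<gamma> else 0)"
      unfolding gap_to_next_def by simp
  qed
  finally show ?thesis .
qed

lemma eventually_same_order:
  fixes F :: "nat \<Rightarrow> 'b \<Rightarrow> real"
  assumes J: "finite J" and inj: "inj_on G J"
    and lim: "\<And>j. j \<in> J \<Longrightarrow> (\<lambda>n. F n j) \<longlonglongrightarrow> G j"
  shows "eventually (\<lambda>n. \<forall>i\<in>J. \<forall>j\<in>J. F n i < F n j \<longleftrightarrow> G i < G j) sequentially"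
proof -
  have pair: "eventually (\<lambda>n. F n i < F n j \<longleftrightarrow> G i < G j) sequentially"
    if i: "i \<in> J" and j: "j \<in> J" for i j
  proof -
    have diff: "(\<lambda>n. F n j - F n i) \<longlonglongrightarrow> G j - G i"
      using lim[OF i] lim[OF j] by (intro tendsto_diff)
    consider "i = j" | "G i < G j" | "G j < G i"
      using inj i j by (metis inj_on_contraD linorder_neqE_linordered_idom)
    then show ?thesis
    proof cases
      case 1
      then show ?thesis by simp
    next
      case 2
      then have "eventually (\<lambda>n. 0 < F n j - F n i) sequentially"
        using diff by (intro order_tendstoD(1)) auto
      then show ?thesis by eventually_elim (use 2 in auto)
    next
      case 3
      then have "eventually (\<lambda>n. F n j - F n i < 0) sequentially"
        using diff by (intro order_tendstoD(2)) auto
      then show ?thesis by eventually_elim (use 3 in auto)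
    qed
  qed
  show ?thesis
    using J by (intro eventually_ball_finite ballI) (simp_all add: pair)
qed

(* Continuity of the entropy: if finitely many labelled points converge to distinct limits, the
   entropy of the point set converges.  (Without distinctness it may jump: merging points lowers
   the entropy.) *)
lemma entropy_image_tendsto:
  fixes F :: "nat \<Rightarrow> 'b \<Rightarrow> real" and G :: "'b \<Rightarrow> real"
  assumes J: "finite J" and inj: "inj_on G J"
    and lim: "\<And>j. j \<in> J \<Longrightarrow> (\<lambda>n. F n j) \<longlonglongrightarrow> G j"
  shows "(\<lambda>n. entropy \<gamma> (F n ` J)) \<longlonglongrightarrow> entropy \<gamma> (G ` J)"
proof -
  define \<phi> where "\<phi> H = (\<Sum>j\<in>J. if \<exists>t\<in>J. G j < G t
      then ((MIN t\<in>{t\<in>J. G j < G t}. H t) - H j) powr \<gamma> else 0)" for H :: "'b \<Rightarrow> real"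
  have "eventually (\<lambda>n. \<forall>i\<in>J. \<forall>j\<in>J. F n i < F n j \<longleftrightarrow> G i < G j) sequentially"
    using J inj lim by (rule eventually_same_order)
  then have "eventually (\<lambda>n. entropy \<gamma> (F n ` J) = \<phi> (F n)) sequentially"
  proof eventually_elim
    case (elim n)
    then have ord: "\<And>i j. i \<in> J \<Longrightarrow> j \<in> J \<Longrightarrow> F n i < F n j \<longleftrightarrow> G i < G j"
      by blast
    have "inj_on (F n) J"
      using inj ord by (auto simp: inj_on_def) (metis linorder_neq_iff)
    then show ?case unfolding \<phi>_def by (rule entropy_image_by_order[OF J _ ord])
  qed
  moreover have "entropy \<gamma> (G ` J) = \<phi> G"
    unfolding \<phi>_def by (rule entropy_image_by_order[OF J inj]) simp
  moreover have "(\<lambda>n. \<phi> (F n)) \<longlonglongrightarrow> \<phi> G"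
    unfolding \<phi>_def
  proof (intro tendsto_sum)
    fix j assume j: "j \<in> J"
    let ?T = "{t\<in>J. G j < G t}"
    show "(\<lambda>n. if \<exists>t\<in>J. G j < G t then ((MIN t\<in>?T. F n t) - F n j) powr \<gamma> else 0)
      \<longlonglongrightarrow> (if \<exists>t\<in>J. G j < G t then ((MIN t\<in>?T. G t) - G j) powr \<gamma> else 0)"
    proof (cases "\<exists>t\<in>J. G j < G t")
      case True
      then have T: "finite ?T" "?T \<noteq> {}" using J by auto
      then have "(MIN t\<in>?T. G t) \<in> G ` ?T" by (intro Min_in) auto
      then have "(MIN t\<in>?T. G t) - G j \<noteq> 0" by auto
      moreover have "(\<lambda>n. MIN t\<in>?T. F n t) \<longlonglongrightarrow> (MIN t\<in>?T. G t)"
        using T lim by (intro tendsto_MIN_finite) auto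
      ultimately show ?thesis
        using True lim[OF j] by (simp, intro tendsto_intros) auto
    qed simp
  qed
  ultimately show ?thesis by (simp add: tendsto_cong)
qed

(* Labels for the point set Y_A together with the endpoints 0 and 1, so that the lemmas about
   labelled point clouds apply to Y ` A \<union> {0, 1}. *)
definition with_endpoints :: "('i \<Rightarrow> real) \<Rightarrow> 'i + bool \<Rightarrow> real" where
  "with_endpoints Y j = (case j of Inl i \<Rightarrow> Y i | Inr b \<Rightarrow> (if b then 1 else 0))"

lemma image_with_endpoints:
  "Y ` B \<union> {0, 1} = with_endpoints Y ` (Inl ` B \<union> range Inr)"
proof -
  have "with_endpoints Y ` (Inl ` B \<union> range Inr) = Y ` B \<union> with_endpoints Y ` range Inr"
    by (simp add: image_Un image_image with_endpoints_def)
  also have "with_endpoints Y ` range Inr = {0, 1}"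
    by (auto simp: with_endpoints_def image_iff split: if_splits)
  finally show ?thesis by simp
qed

lemma energy_measurable:
  assumes B: "finite B"
    and M: "\<And>i. i \<in> B \<Longrightarrow> Mf i \<in> borel_measurable M"
    and Y: "\<And>i. i \<in> B \<Longrightarrow> Yf i \<in> borel_measurable M"
  shows "(\<lambda>x. energy_obj \<gamma> \<beta> (\<lambda>i. Mf i x) (\<lambda>i. Yf i x) B) \<in> borel_measurable M"
proof -
  have "(\<lambda>x. entropy \<gamma> ((\<lambda>j. with_endpoints (\<lambda>i. Yf i x) j) ` (Inl ` B \<union> range Inr)))
          \<in> borel_measurable M"
    using B Y by (intro entropy_image_measurable) (auto simp: with_endpoints_def)
  moreover have "(\<lambda>x. \<beta> * (\<Sum>i\<in>B. Mf i x)) \<in> borel_measurable M"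
    using M by (intro borel_measurable_times borel_measurable_const borel_measurable_sum) auto
  ultimately show ?thesis
    unfolding energy_obj_def image_with_endpoints by (rule borel_measurable_diff[rotated])
qed

lemma energy_tendsto:
  assumes B: "finite B"
    and M: "\<And>i. i \<in> B \<Longrightarrow> (\<lambda>n. Mn n i) \<longlonglongrightarrow> Mi i"
    and Y: "\<And>i. i \<in> B \<Longrightarrow> (\<lambda>n. Yn n i) \<longlonglongrightarrow> Yi i"
    and inj: "inj_on Yi B" and interior: "\<And>i. i \<in> B \<Longrightarrow> Yi i \<noteq> 0 \<and> Yi i \<noteq> 1"
    and b: "bn \<longlonglongrightarrow> b"
  shows "(\<lambda>n. energy_obj \<gamma> (bn n) (Mn n) (Yn n) B) \<longlonglongrightarrow> energy_obj \<gamma> b Mi Yi B"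
proof -
  have "inj_on (with_endpoints Yi) (Inl ` B \<union> range Inr)"
    using inj interior by (fastforce simp: inj_on_def with_endpoints_def split: sum.splits if_splits)
  then have "(\<lambda>n. entropy \<gamma> (with_endpoints (Yn n) ` (Inl ` B \<union> range Inr)))
      \<longlonglongrightarrow> entropy \<gamma> (with_endpoints Yi ` (Inl ` B \<union> range Inr))"
    using B Y by (intro entropy_image_tendsto) (auto simp: with_endpoints_def)
  moreover have "(\<lambda>n. bn n * (\<Sum>i\<in>B. Mn n i)) \<longlonglongrightarrow> b * (\<Sum>i\<in>B. Mi i)"
    using b M by (intro tendsto_mult tendsto_sum) auto
  ultimately show ?thesis
    unfolding energy_obj_def image_with_endpoints by (rule tendsto_diff[rotated])
qed

lemma energy_obj_cong:
  "(\<And>i. i \<in> A \<Longrightarrow> M i = M' i) \<Longrightarrow> (\<And>i. i \<in> A \<Longrightarrow> Y i = Y' i) \<Longrightarrow>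
    energy_obj \<gamma> \<beta> M Y A = energy_obj \<gamma> \<beta> M' Y' A"
  unfolding energy_obj_def by (metis (no_types, lifting) image_cong sum.cong)

definition nondegenerate :: "real \<Rightarrow> real \<Rightarrow> nat \<Rightarrow> (nat \<Rightarrow> real) \<Rightarrow> (nat \<Rightarrow> real) \<Rightarrow> bool" where
  "nondegenerate \<gamma> \<beta> k M Y \<longleftrightarrow> (\<forall>i\<in>{1..k}. Y i \<noteq> 0 \<and> Y i \<noteq> 1) \<and> inj_on Y {1..k} \<and>
     inj_on (energy_obj \<gamma> \<beta> M Y) (Pow {1..k})"

lemma nondegenerate_cong:
  assumes "\<And>i. i \<in> {1..k} \<Longrightarrow> M i = M' i \<and> Y i = Y' i"
  shows "nondegenerate \<gamma> \<beta> k M Y = nondegenerate \<gamma> \<beta> k M' Y'"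
proof -
  have "inj_on (energy_obj \<gamma> \<beta> M Y) (Pow {1..k}) = inj_on (energy_obj \<gamma> \<beta> M' Y') (Pow {1..k})"
    using assms by (intro inj_on_cong energy_obj_cong) auto
  moreover have "inj_on Y {1..k} = inj_on Y' {1..k}"
    using assms by (intro inj_on_cong) auto
  ultimately show ?thesis
    using assms unfolding nondegenerate_def by auto
qed

lemma energy_measurable_Pow:
  assumes "\<And>i. Mf i \<in> borel_measurable M" "\<And>i. Yf i \<in> borel_measurable M" "A \<in> Pow {1..n}"
  shows "(\<lambda>x. energy_obj \<gamma> \<beta> (\<lambda>i. Mf i x) (\<lambda>i. Yf i x) A) \<in> borel_measurable M"
  using assms by (intro energy_measurable) (auto intro: finite_subset)

lemma nondegenerate_sets:
  assumes M: "\<And>i. Mf i \<in> borel_measurable M" and Y: "\<And>i. Yf i \<in> borel_measurable M"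
  shows "{x \<in> space M. nondegenerate \<gamma> \<beta> k (\<lambda>i. Mf i x) (\<lambda>i. Yf i x)} \<in> sets M"
  unfolding nondegenerate_def inj_on_def
  by (intro sets.sets_Collect_conj sets.sets_Collect_finite_All sets.sets_Collect_imp
      sets.sets_Collect_neg sets.sets_Collect_const borel_measurable_eq borel_measurable_const
      energy_measurable_Pow[OF M Y] Y finite_Pow_iff[THEN iffD2] finite_atLeastAtMost) auto

lemma unique_maximizer_sets:
  assumes M: "\<And>i. Mf i \<in> borel_measurable M" and Y: "\<And>i. Yf i \<in> borel_measurable M"
  shows "{x \<in> space M. unique_maximizer \<gamma> b n (\<lambda>i. Mf i x) (\<lambda>i. Yf i x) A} \<in> sets M"
proof (cases "A \<subseteq> {1..n}")
  case True
  then have "unique_maximizer \<gamma> b n M' Y' A \<longleftrightarrow>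
      (\<forall>B\<in>Pow {1..n}. B \<noteq> A \<longrightarrow> energy_obj \<gamma> b M' Y' B < energy_obj \<gamma> b M' Y' A)" for M' Y'
    unfolding unique_maximizer_def by auto
  then show ?thesis
    using True
    by (simp only:, intro sets.sets_Collect_finite_All sets.sets_Collect_imp sets.sets_Collect_const
        borel_measurable_less energy_measurable_Pow[OF M Y]) auto
qed (simp add: unique_maximizer_def)

lemma unique_maximizer_exists:
  assumes inj: "inj_on (energy_obj \<gamma> \<beta> M Y) (Pow {1..n})"
  shows "\<exists>A. unique_maximizer \<gamma> \<beta> n M Y A"
proof -
  let ?f = "energy_obj \<gamma> \<beta> M Y"
  have "Max (?f ` Pow {1..n}) \<in> ?f ` Pow {1..n}" by (intro Max_in) auto
  then obtain A where A: "A \<in> Pow {1..n}" "?f A = Max (?f ` Pow {1..n})" by auto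
  have "?f B < ?f A" if "B \<subseteq> {1..n}" "B \<noteq> A" for B
  proof -
    have "?f B \<le> ?f A" using A(2) that(1) by simp
    moreover have "?f B \<noteq> ?f A" using inj A(1) that by (auto dest: inj_onD)
    ultimately show ?thesis by simp
  qed
  then have "unique_maximizer \<gamma> \<beta> n M Y A"
    using A(1) unfolding unique_maximizer_def by blast
  then show ?thesis ..
qed

(* Strict optimality is an open condition: it survives convergence of all objective values. *)
lemma unique_maximizer_eventually:
  assumes A: "unique_maximizer \<gamma> \<beta> n M Y A"
    and lim: "\<And>B. B \<subseteq> {1..n} \<Longrightarrow>
      (\<lambda>m. energy_obj \<gamma> (bs m) (Ms m) (Ys m) B) \<longlonglongrightarrow> energy_obj \<gamma> \<beta> M Y B"
  shows "eventually (\<lambda>m. unique_maximizer \<gamma> (bs m) n (Ms m) (Ys m) A) sequentially"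
proof -
  let ?f = "\<lambda>m. energy_obj \<gamma> (bs m) (Ms m) (Ys m)"
  have A_sub: "A \<subseteq> {1..n}" using A unfolding unique_maximizer_def by blast
  have "eventually (\<lambda>m. ?f m B < ?f m A) sequentially"
    if B: "B \<in> Pow {1..n} - {A}" for B
  proof -
    have "(\<lambda>m. ?f m A - ?f m B) \<longlonglongrightarrow> energy_obj \<gamma> \<beta> M Y A - energy_obj \<gamma> \<beta> M Y B"
      using lim A_sub B by (intro tendsto_diff) auto
    moreover have "0 < energy_obj \<gamma> \<beta> M Y A - energy_obj \<gamma> \<beta> M Y B"
      using A B unfolding unique_maximizer_def by auto
    ultimately have "eventually (\<lambda>m. 0 < ?f m A - ?f m B) sequentially"
      by (rule order_tendstoD(1))
    then show ?thesis by eventually_elim simp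
  qed
  then have "eventually (\<lambda>m. \<forall>B\<in>Pow {1..n} - {A}. ?f m B < ?f m A) sequentially"
    by (intro eventually_ball_finite) auto
  then show ?thesis
  proof eventually_elim
    case (elim m)
    then show ?case using A_sub unfolding unique_maximizer_def by auto
  qed
qed

lemma unique_maximizer_stable:
  assumes nd: "nondegenerate \<gamma> \<beta> k Mi Yi"
    and M: "\<And>i. i \<in> {1..k} \<Longrightarrow> (\<lambda>n. Mn n i) \<longlonglongrightarrow> Mi i"
    and Y: "\<And>i. i \<in> {1..k} \<Longrightarrow> (\<lambda>n. Yn n i) \<longlonglongrightarrow> Yi i"
    and b: "bn \<longlonglongrightarrow> \<beta>"
  shows "\<exists>A. unique_maximizer \<gamma> \<beta> k Mi Yi A \<and>
           eventually (\<lambda>n. unique_maximizer \<gamma> (bn n) k (Mn n) (Yn n) A) sequentially"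
proof -
  obtain A where A: "unique_maximizer \<gamma> \<beta> k Mi Yi A"
    using nd unique_maximizer_exists unfolding nondegenerate_def by blast
  have "(\<lambda>n. energy_obj \<gamma> (bn n) (Mn n) (Yn n) B) \<longlonglongrightarrow> energy_obj \<gamma> \<beta> Mi Yi B"
    if "B \<subseteq> {1..k}" for B
    using that nd M Y b
  proof (intro energy_tendsto)
    show "finite B" using that by (rule finite_subset) simp
    show "inj_on Yi B" using nd that unfolding nondegenerate_def by (blast intro: inj_on_subset)
  qed (use that nd in \<open>auto simp: nondegenerate_def\<close>)
  then have "eventually (\<lambda>n. unique_maximizer \<gamma> (bn n) k (Mn n) (Yn n) A) sequentially"
    by (rule unique_maximizer_eventually[OF A])
  with A show ?thesis by blast
qed

(* The same, in the form of the theorem: for large n the truncation min (n - 1) k equals k. *)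
lemma eventually_common_unique_maximizer:
  assumes nd: "nondegenerate \<gamma> \<beta> k Mi Yi"
    and M: "\<And>i. i \<in> {1..k} \<Longrightarrow> (\<lambda>n. Mn n i) \<longlonglongrightarrow> Mi i"
    and Y: "\<And>i. i \<in> {1..k} \<Longrightarrow> (\<lambda>n. Yn n i) \<longlonglongrightarrow> Yi i"
    and b: "bn \<longlonglongrightarrow> \<beta>"
  shows "eventually (\<lambda>n. \<exists>A. unique_maximizer \<gamma> (bn n) (min (n - 1) k) (Mn n) (Yn n) A \<and>
                                unique_maximizer \<gamma> \<beta> k Mi Yi A) sequentially"
proof -
  obtain A where A: "unique_maximizer \<gamma> \<beta> k Mi Yi A"
    and ev: "eventually (\<lambda>n. unique_maximizer \<gamma> (bn n) k (Mn n) (Yn n) A) sequentially"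
    using unique_maximizer_stable[OF nd M Y b] by blast
  show ?thesis
    using ev eventually_ge_at_top[of "Suc k"]
  proof eventually_elim
    case (elim n)
    then have "min (n - 1) k = k" by simp
    with elim A show ?case by auto
  qed
qed

lemma common_unique_maximizer_sets:
  assumes "\<And>i. M1 i \<in> borel_measurable M" "\<And>i. Y1 i \<in> borel_measurable M"
    and "\<And>i. M2 i \<in> borel_measurable M" "\<And>i. Y2 i \<in> borel_measurable M"
  shows "{x \<in> space M. \<exists>A. unique_maximizer \<gamma> b1 n1 (\<lambda>i. M1 i x) (\<lambda>i. Y1 i x) A \<and>
                          unique_maximizer \<gamma> b2 n2 (\<lambda>i. M2 i x) (\<lambda>i. Y2 i x) A} \<in> sets M"
proof -
  have "(\<exists>A. unique_maximizer \<gamma> b1 n1 M1' Y1' A \<and> unique_maximizer \<gamma> b2 n2 M2' Y2' A) \<longleftrightarrow>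
      (\<exists>A\<in>Pow {1..n2}. unique_maximizer \<gamma> b1 n1 M1' Y1' A \<and> unique_maximizer \<gamma> b2 n2 M2' Y2' A)"
    for M1' Y1' M2' Y2' unfolding unique_maximizer_def by auto
  then show ?thesis
    using assms
    by (simp only:, intro sets.sets_Collect_finite_Ex sets.sets_Collect_conj unique_maximizer_sets) auto
qed

lemma AE_transfer_law:
  assumes F: "F \<in> measurable P S" and G: "G \<in> measurable Q S"
    and law: "distr P S F = distr Q S G"
    and R: "{z \<in> space S. R z} \<in> sets S"
    and AE: "AE w in Q. R (G w)"
  shows "AE x in P. R (F x)"
proof -
  have "AE z in distr Q S G. R z" using AE AE_distr_iff[OF G R] by simp
  then show ?thesis using AE_distr_iff[OF F R] law by metis
qed

(* If almost every sample point eventually lies in E n, then P(E n) tends to 1 (via the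
   increasing events H n = intersection of E m for m \<ge> n). *)
lemma (in prob_space) measure_tendsto_one_if_AE_eventually:
  assumes sets: "\<And>n. E n \<in> events"
    and AE: "AE x in M. eventually (\<lambda>n. x \<in> E n) sequentially"
  shows "(\<lambda>n. prob (E n)) \<longlonglongrightarrow> 1"
proof -
  define H where "H n = (\<Inter>m\<in>{n..}. E m)" for n
  have H_sets: "H n \<in> events" for n
    unfolding H_def using sets by (intro sets.countable_INT') auto
  have "incseq H" unfolding H_def incseq_def by auto
  then have "(\<lambda>n. prob (H n)) \<longlonglongrightarrow> prob (\<Union>n. H n)"
    using H_sets by (intro finite_Lim_measure_incseq) auto
  moreover have "prob (\<Union>n. H n) = 1"
  proof -
    have "AE x in M. x \<in> (\<Union>n. H n)"
      using AE by eventually_elim (auto simp: H_def eventually_sequentially)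
    then show ?thesis using H_sets by (subst AE_in_set_eq_1[symmetric]) auto
  qed
  ultimately have H_lim: "(\<lambda>n. prob (H n)) \<longlonglongrightarrow> 1" by simp
  show ?thesis
  proof (rule tendsto_sandwich[OF _ _ H_lim tendsto_const])
    show "\<forall>\<^sub>F n in sequentially. prob (H n) \<le> prob (E n)"
      using sets by (intro always_eventually allI finite_measure_mono) (auto simp: H_def)
  qed auto
qed

lemma AE_PiM_by_slices:
  fixes \<mu> :: "'b measure"
  assumes \<mu>: "prob_space \<mu>"
    and R: "{e \<in> space (PiM UNIV (\<lambda>_::nat. \<mu>)). R e} \<in> sets (PiM UNIV (\<lambda>_::nat. \<mu>))"
    and slices: "AE X in PiM UNIV (\<lambda>_::nat. \<mu>). AE x in \<mu>. R (X(j := x))"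
  shows "AE e in PiM UNIV (\<lambda>_::nat. \<mu>). R e"
proof -
  let ?S = "PiM UNIV (\<lambda>_::nat. \<mu>)"
  interpret S: prob_space ?S using \<mu> by (intro prob_space_PiM)
  interpret \<mu>: prob_space \<mu> by (rule \<mu>)
  interpret pair: pair_sigma_finite \<mu> ?S ..
  define upd where "upd w = (snd w)(j := fst w)" for w :: "'b \<times> (nat \<Rightarrow> 'b)"
  have upd: "upd \<in> measurable (\<mu> \<Otimes>\<^sub>M ?S) ?S"
    unfolding upd_def by (rule measurable_fun_upd[where J=UNIV]) auto
  have law: "distr (\<mu> \<Otimes>\<^sub>M ?S) ?S upd = ?S"
    using distr_pair_PiM_eq_PiM[of UNIV "\<lambda>_. \<mu>" j] \<mu> by (simp add: upd_def[abs_def] case_prod_beta')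
  have R_pair: "{w \<in> space (\<mu> \<Otimes>\<^sub>M ?S). R (upd w)} \<in> sets (\<mu> \<Otimes>\<^sub>M ?S)"
  proof -
    have "{w \<in> space (\<mu> \<Otimes>\<^sub>M ?S). R (upd w)} = upd -` {e \<in> space ?S. R e} \<inter> space (\<mu> \<Otimes>\<^sub>M ?S)"
      using measurable_space[OF upd] by auto
    then show ?thesis using measurable_sets[OF upd R] by simp
  qed
  have "AE x in \<mu>. AE X in ?S. R (upd (x, X))"
    using slices pair.AE_commute[of "\<lambda>x X. R (upd (x, X))"] R_pair by (simp add: upd_def)
  then have "AE w in \<mu> \<Otimes>\<^sub>M ?S. R (upd w)"
    using pair.AE_pair_measure[OF R_pair] by simp
  then have "AE e in distr (\<mu> \<Otimes>\<^sub>M ?S) ?S upd. R e"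
    using AE_distr_iff[OF upd R] by simp
  then show ?thesis unfolding law .
qed

lemma exp1_prob: "prob_space exp1_law"
  unfolding exp1_law_def by (rule prob_space_exponential_density) simp

lemma exp1_sets [measurable_cong]: "sets exp1_law = sets borel"
  unfolding exp1_law_def by simp

lemma exp1_AE_pos_ne: "AE x in exp1_law. 0 < x \<and> x \<noteq> a"
proof -
  have "AE x in lborel. x \<noteq> 0 \<and> x \<noteq> a"
    using AE_lborel_singleton[of 0] AE_lborel_singleton[of a] by eventually_elim simp
  then show ?thesis
    unfolding exp1_law_def
    by (subst AE_density) (auto elim!: AE_mp simp: exponential_density_def)
qed

lemma unif_prob: "prob_space unif01_law"
  unfolding unif01_law_def by (rule prob_space_uniform_measure) auto

lemma unif_sets [measurable_cong]: "sets unif01_law = sets borel"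
  unfolding unif01_law_def by simp

lemma unif_AE_ne: "AE x in unif01_law. x \<noteq> a"
  unfolding unif01_law_def
  by (rule AE_uniform_measureI) (use AE_lborel_singleton[of a] in \<open>auto elim!: AE_mp\<close>)

definition arrival :: "(nat \<Rightarrow> real) \<Rightarrow> nat \<Rightarrow> real" where
  "arrival e i = (\<Sum>l\<in>{1..i}. e l)"

lemma arrival_update_below: "i < j \<Longrightarrow> arrival (X(j := a)) i = arrival X i"
  unfolding arrival_def by (rule sum.cong) auto

lemma arrival_update_at:
  assumes "1 \<le> j"
  shows "arrival (X(j := a)) j = (\<Sum>l\<in>{1..<j}. X l) + a"
proof -
  have "{1..j} = insert j {1..<j}" using assms by auto
  then have "arrival (X(j := a)) j = a + (\<Sum>l\<in>{1..<j}. (X(j := a)) l)"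
    unfolding arrival_def by simp
  also have "(\<Sum>l\<in>{1..<j}. (X(j := a)) l) = (\<Sum>l\<in>{1..<j}. X l)"
    by (rule sum.cong) auto
  finally show ?thesis by (simp add: fun_upd_def)
qed

lemma powr_eq_imp_base_eq:
  fixes x y p :: real
  assumes "0 < x" "0 < y" "p \<noteq> 0" "x powr p = y powr p"
  shows "x = y"
proof -
  have "x = (x powr p) powr (1 / p)" "y = (y powr p) powr (1 / p)"
    using assms(1-3) by (simp_all add: powr_powr)
  then show ?thesis using assms(4) by metis
qed

(* One-coordinate version of the no-tie property: if j is the largest index occurring, then as
   a function of E_j > 0 the difference of power sums is a strictly monotone function plus a
   constant, hence takes any given value c for at most one E_j. *)
lemma AE_exp_slice_no_tie:
  fixes p c :: real
  assumes U: "finite U" and j: "j \<in> U" "j \<notin> V" "1 \<le> j"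
    and below: "\<And>i. i \<in> U \<union> V \<Longrightarrow> i \<le> j"
    and X: "\<And>l. 0 \<le> X l" and p: "p \<noteq> 0"
  shows "AE a in exp1_law.
    (\<Sum>i\<in>U. arrival (X(j := a)) i powr p) - (\<Sum>i\<in>V. arrival (X(j := a)) i powr p) \<noteq> c"
proof -
  define S where "S = (\<Sum>l\<in>{1..<j}. X l)"
  define C where "C = (\<Sum>i\<in>U - {j}. arrival X i powr p) - (\<Sum>i\<in>V. arrival X i powr p)"
  define \<Phi> where "\<Phi> a = (\<Sum>i\<in>U. arrival (X(j := a)) i powr p) - (\<Sum>i\<in>V. arrival (X(j := a)) i powr p)"
    for a
  have S: "0 \<le> S" unfolding S_def using X by (simp add: sum_nonneg)
  have \<Phi>: "\<Phi> a = (S + a) powr p + C" for a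
  proof -
    have "(\<Sum>i\<in>U. arrival (X(j := a)) i powr p)
        = arrival (X(j := a)) j powr p + (\<Sum>i\<in>U - {j}. arrival (X(j := a)) i powr p)"
      using U j by (simp add: sum.remove)
    moreover have "(\<Sum>i\<in>U - {j}. arrival (X(j := a)) i powr p) = (\<Sum>i\<in>U - {j}. arrival X i powr p)"
      using below by (intro sum.cong refl) (simp add: arrival_update_below le_neq_implies_less)
    moreover have "(\<Sum>i\<in>V. arrival (X(j := a)) i powr p) = (\<Sum>i\<in>V. arrival X i powr p)"
      using below j(2) by (intro sum.cong refl arg_cong2[where f="(powr)"] arrival_update_below)
        (metis UnI2 le_neq_implies_less)
    ultimately show ?thesis
      unfolding \<Phi>_def C_def S_def using arrival_update_at[OF j(3)] by simp
  qed
  have unique: "a = b" if "0 < a" "0 < b" "\<Phi> a = c" "\<Phi> b = c" for a b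
    using powr_eq_imp_base_eq[of "S + a" "S + b" p] that S p by (simp add: \<Phi>)
  show ?thesis
  proof (cases "\<exists>a0>0. \<Phi> a0 = c")
    case True
    then obtain a0 where a0: "0 < a0" "\<Phi> a0 = c" by blast
    show ?thesis
      using exp1_AE_pos_ne[of a0] by eventually_elim (use unique a0 in \<open>auto simp: \<Phi>_def\<close>)
  next
    case False
    show ?thesis
      using exp1_AE_pos_ne[of 0] by eventually_elim (use False in \<open>auto simp: \<Phi>_def\<close>)
  qed
qed

lemma AE_exp_nonneg: "AE X in PiM UNIV (\<lambda>_::nat. exp1_law). \<forall>l. 0 \<le> X l"
proof -
  have "AE X in PiM UNIV (\<lambda>_::nat. exp1_law). 0 \<le> X l" for l
    using exp1_AE_pos_ne[of 0] by (intro AE_PiM_component exp1_prob) (auto elim!: AE_mp)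
  then show ?thesis by (subst AE_all_countable) blast
qed

(* No ties between power sums of arrival times over different index sets: after cancelling
   common indices, slice in the largest index of the symmetric difference. *)
lemma AE_exp_no_tie:
  fixes p c :: real
  assumes A: "finite A" and B: "finite B" and AB: "A \<noteq> B"
    and pos: "\<And>i. i \<in> A \<union> B \<Longrightarrow> 1 \<le> i" and p: "p \<noteq> 0"
  shows "AE e in PiM UNIV (\<lambda>_::nat. exp1_law).
    (\<Sum>i\<in>A. arrival e i powr p) - (\<Sum>i\<in>B. arrival e i powr p) \<noteq> c"
proof -
  have disjoint_case: "AE e in PiM UNIV (\<lambda>_::nat. exp1_law).
      (\<Sum>i\<in>U. arrival e i powr p) - (\<Sum>i\<in>V. arrival e i powr p) \<noteq> c'"
    if UV: "finite U" "finite V" "U \<inter> V = {}" "U \<noteq> {}" "Max (U \<union> V) \<in> U"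
      and pos_UV: "\<And>i. i \<in> U \<union> V \<Longrightarrow> 1 \<le> i" for U V c'
  proof (rule AE_PiM_by_slices[OF exp1_prob _ _, where j="Max (U \<union> V)"])
    show "{e \<in> space (PiM UNIV (\<lambda>_::nat. exp1_law)).
        (\<Sum>i\<in>U. arrival e i powr p) - (\<Sum>i\<in>V. arrival e i powr p) \<noteq> c'}
        \<in> sets (PiM UNIV (\<lambda>_::nat. exp1_law))"
      unfolding arrival_def by measurable
    show "AE X in PiM UNIV (\<lambda>_::nat. exp1_law). AE a in exp1_law.
        (\<Sum>i\<in>U. arrival (X(Max (U \<union> V) := a)) i powr p)
          - (\<Sum>i\<in>V. arrival (X(Max (U \<union> V) := a)) i powr p) \<noteq> c'"
      using AE_exp_nonneg
    proof eventually_elim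
      case (elim X)
      show ?case
        using UV pos_UV elim p
        by (intro AE_exp_slice_no_tie) (auto intro: pos_UV)
    qed
  qed
  have split: "(\<Sum>i\<in>A. f i) - (\<Sum>i\<in>B. f i) = (\<Sum>i\<in>A - B. f i) - (\<Sum>i\<in>B - A. f i)"
    for f :: "nat \<Rightarrow> real"
    using sum.Int_Diff[OF A, of f B] sum.Int_Diff[OF B, of f A] by (simp add: Int_commute)
  have "(A - B) \<union> (B - A) \<noteq> {}" using AB by blast
  then have "Max ((A - B) \<union> (B - A)) \<in> (A - B) \<union> (B - A)" using A B by (intro Max_in) auto
  then consider "Max ((A - B) \<union> (B - A)) \<in> A - B" | "Max ((B - A) \<union> (A - B)) \<in> B - A"
    by (auto simp: Un_commute)
  then show ?thesis
  proof cases
    case 1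
    then show ?thesis
      using disjoint_case[of "A - B" "B - A" c] A B pos by (auto simp: split)
  next
    case 2
    then have "AE e in PiM UNIV (\<lambda>_::nat. exp1_law).
        (\<Sum>i\<in>B - A. arrival e i powr p) - (\<Sum>i\<in>A - B. arrival e i powr p) \<noteq> - c"
      using A B pos by (intro disjoint_case) auto
    then show ?thesis by eventually_elim (auto simp: split)
  qed
qed

lemma AE_unif_interior_distinct:
  "AE u in PiM UNIV (\<lambda>_::nat. unif01_law). (\<forall>i\<in>{1..k}. u i \<noteq> 0 \<and> u i \<noteq> 1) \<and> inj_on u {1..k}"
proof -
  have avoid: "AE u in PiM UNIV (\<lambda>_::nat. unif01_law). u i \<noteq> c" for i c
    by (intro AE_PiM_component unif_prob unif_AE_ne) auto
  have distinct: "AE u in PiM UNIV (\<lambda>_::nat. unif01_law). u i \<noteq> u i'" if "i \<noteq> i'" for i i'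
  proof (rule AE_PiM_by_slices[OF unif_prob _ _, where j=i])
    show "AE X in PiM UNIV (\<lambda>_::nat. unif01_law). AE x in unif01_law. (X(i := x)) i \<noteq> (X(i := x)) i'"
      using that unif_AE_ne by simp
    show "{u \<in> space (PiM UNIV (\<lambda>_::nat. unif01_law)). u i \<noteq> u i'}
        \<in> sets (PiM UNIV (\<lambda>_::nat. unif01_law))"
      by (intro sets.sets_Collect_neg borel_measurable_eq) measurable
  qed
  have "AE u in PiM UNIV (\<lambda>_::nat. unif01_law). (\<forall>i\<in>{1..k}. u i \<noteq> 0 \<and> u i \<noteq> 1) \<and>
      (\<forall>i\<in>{1..k}. \<forall>i'\<in>{1..k}. i \<noteq> i' \<longrightarrow> u i \<noteq> u i')"
    using avoid distinct by (intro AE_conjI AE_finite_allI) auto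
  then show ?thesis by eventually_elim (auto simp: inj_on_def)
qed

lemma AE_exp_energy_inj:
  assumes p: "p \<noteq> 0" and \<beta>: "\<beta> \<noteq> 0"
  shows "AE e in PiM UNIV (\<lambda>_::nat. exp1_law).
           inj_on (energy_obj \<gamma> \<beta> (\<lambda>i. arrival e i powr p) Y) (Pow {1..k})"
proof -
  have no_tie: "AE e in PiM UNIV (\<lambda>_::nat. exp1_law).
      energy_obj \<gamma> \<beta> (\<lambda>i. arrival e i powr p) Y A \<noteq> energy_obj \<gamma> \<beta> (\<lambda>i. arrival e i powr p) Y B"
    if AB: "A \<subseteq> {1..k}" "B \<subseteq> {1..k}" "A \<noteq> B" for A B
  proof -
    let ?c = "(entropy \<gamma> (Y ` A \<union> {0, 1}) - entropy \<gamma> (Y ` B \<union> {0, 1})) / \<beta>"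
    have "AE e in PiM UNIV (\<lambda>_::nat. exp1_law).
        (\<Sum>i\<in>A. arrival e i powr p) - (\<Sum>i\<in>B. arrival e i powr p) \<noteq> ?c"
      using AB p by (intro AE_exp_no_tie) (auto intro: finite_subset)
    then show ?thesis
      by eventually_elim (use \<beta> in \<open>auto simp: energy_obj_def field_simps\<close>)
  qed
  have "AE e in PiM UNIV (\<lambda>_::nat. exp1_law). \<forall>A\<in>Pow {1..k}. \<forall>B\<in>Pow {1..k}.
      A \<noteq> B \<longrightarrow> energy_obj \<gamma> \<beta> (\<lambda>i. arrival e i powr p) Y A \<noteq> energy_obj \<gamma> \<beta> (\<lambda>i. arrival e i powr p) Y B"
    using no_tie by (intro AE_finite_allI) auto
  then show ?thesis by eventually_elim (auto simp: inj_on_def)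
qed

(* The continuum configuration is almost surely nondegenerate: combine the two previous facts
   by Fubini over the independent exponential and uniform sequences. *)
lemma continuum_nondegenerate:
  assumes \<alpha>: "\<alpha> \<noteq> 0" and \<beta>: "\<beta> \<noteq> 0"
  shows "AE w in PiM UNIV (\<lambda>_::nat. exp1_law) \<Otimes>\<^sub>M PiM UNIV (\<lambda>_::nat. unif01_law).
    nondegenerate \<gamma> \<beta> k (\<lambda>i. fst (continuum_config \<alpha> w i)) (\<lambda>i. snd (continuum_config \<alpha> w i))"
proof -
  let ?E = "PiM UNIV (\<lambda>_::nat. exp1_law)" and ?U = "PiM UNIV (\<lambda>_::nat. unif01_law)"
  interpret E: prob_space ?E using exp1_prob by (rule prob_space_PiM)
  interpret U: prob_space ?U using unif_prob by (rule prob_space_PiM)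
  interpret EU: pair_sigma_finite ?E ?U ..
  define p where "p = -1 / \<alpha>"
  have p: "p \<noteq> 0" using \<alpha> by (simp add: p_def)
  define R where "R e u \<longleftrightarrow> nondegenerate \<gamma> \<beta> k (\<lambda>i. arrival e i powr p) u" for e u
  have R: "{w \<in> space (?E \<Otimes>\<^sub>M ?U). R (fst w) (snd w)} \<in> sets (?E \<Otimes>\<^sub>M ?U)"
    unfolding R_def arrival_def by (rule nondegenerate_sets) measurable
  have "AE u in ?U. AE e in ?E. R e u"
    using AE_unif_interior_distinct[of k]
  proof eventually_elim
    case (elim u)
    show ?case
      using AE_exp_energy_inj[OF p \<beta>, of \<gamma> u k]
      by eventually_elim (use elim in \<open>simp add: R_def nondegenerate_def\<close>)
  qed
  then have "AE w in ?E \<Otimes>\<^sub>M ?U. R (fst w) (snd w)"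
    using EU.AE_commute[OF R] EU.AE_pair_iff[OF R] by simp
  then show ?thesis by (simp add: R_def p_def continuum_config_def arrival_def)
qed

lemma nondegenerate_AE_of_law:
  fixes P :: "'a measure" and Minf Yinf :: "nat \<Rightarrow> 'a \<Rightarrow> real"
  assumes meas: "\<forall>i. Minf i \<in> borel_measurable P \<and> Yinf i \<in> borel_measurable P"
    and law: "distr P (PiM UNIV (\<lambda>_::nat. borel \<Otimes>\<^sub>M borel))
                    (\<lambda>x i. (Minf (Suc i) x, Yinf (Suc i) x))
               = distr (PiM UNIV (\<lambda>_::nat. exp1_law) \<Otimes>\<^sub>M PiM UNIV (\<lambda>_::nat. unif01_law))
                    (PiM UNIV (\<lambda>_::nat. borel \<Otimes>\<^sub>M borel))
                    (\<lambda>eu i. continuum_config \<alpha> eu (Suc i))"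
    and \<alpha>: "\<alpha> \<noteq> 0" and \<beta>: "\<beta> \<noteq> 0"
  shows "AE x in P. nondegenerate \<gamma> \<beta> k (\<lambda>i. Minf i x) (\<lambda>i. Yinf i x)"
proof -
  let ?S = "PiM UNIV (\<lambda>_::nat. borel \<Otimes>\<^sub>M borel) :: (nat \<Rightarrow> real \<times> real) measure"
  define R where "R z \<longleftrightarrow> nondegenerate \<gamma> \<beta> k (\<lambda>i. fst (z (i - 1))) (\<lambda>i. snd (z (i - 1)))"
    for z :: "nat \<Rightarrow> real \<times> real"
  have shift: "R (\<lambda>i. f (Suc i)) \<longleftrightarrow> nondegenerate \<gamma> \<beta> k (\<lambda>i. fst (f i)) (\<lambda>i. snd (f i))"
    for f :: "nat \<Rightarrow> real \<times> real"
    unfolding R_def by (rule nondegenerate_cong) auto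
  have R: "{z \<in> space ?S. R z} \<in> sets ?S"
    unfolding R_def by (rule nondegenerate_sets) measurable
  have F: "(\<lambda>x i. (Minf (Suc i) x, Yinf (Suc i) x)) \<in> measurable P ?S"
    using meas by (intro measurable_PiM_single' measurable_Pair) (auto simp: space_pair_measure)
  have G: "(\<lambda>eu i. continuum_config \<alpha> eu (Suc i))
      \<in> measurable (PiM UNIV (\<lambda>_::nat. exp1_law) \<Otimes>\<^sub>M PiM UNIV (\<lambda>_::nat. unif01_law)) ?S"
    unfolding continuum_config_def
    by (intro measurable_PiM_single' measurable_Pair) (measurable, auto simp: space_pair_measure)
  have "AE w in PiM UNIV (\<lambda>_::nat. exp1_law) \<Otimes>\<^sub>M PiM UNIV (\<lambda>_::nat. unif01_law).
      R (\<lambda>i. continuum_config \<alpha> w (Suc i))"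
    using continuum_nondegenerate[OF \<alpha> \<beta>, of \<gamma> k]
    by eventually_elim (simp only: shift[of "continuum_config \<alpha> _"])
  then have "AE x in P. R (\<lambda>i. (Minf (Suc i) x, Yinf (Suc i) x))"
    by (rule AE_transfer_law[OF F G law R])
  then show ?thesis
    by eventually_elim (simp add: shift[of "\<lambda>i. (Minf i _, Yinf i _)"])
qed

theorem mainTheorem12:
  fixes P :: "'a measure"
    and D :: "real measure"
    and \<alpha> \<gamma> \<beta> :: real
    and L0 :: "real \<Rightarrow> real"
    and b \<beta>N :: "nat \<Rightarrow> real"
    and MN YN :: "nat \<Rightarrow> nat \<Rightarrow> 'a \<Rightarrow> real"
    and Minf Yinf :: "nat \<Rightarrow> 'a \<Rightarrow> real"
  assumes P: "prob_space P"
    and D: "prob_space D" "sets D = sets borel"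
    and D_pos: "measure D {x. x \<le> 0} = 0"
    and D_atomless: "\<forall>x. measure D {x} = 0"
    and alpha: "0 < \<alpha>" "\<alpha> < 1"
    and L0: "slowly_varying L0"
    and tail: "(\<lambda>t. measure D {x. x > t}) \<sim>[at_top] (\<lambda>t. L0 t * t powr (- \<alpha>))"
    and bN: "(\<lambda>N. measure D {x. x > b N}) \<sim>[sequentially] (\<lambda>N. 1 / real N)"
    and gamma: "0 < \<gamma>" "\<gamma> < 1"
    and meas: "\<forall>N i. MN N i \<in> borel_measurable P \<and> YN N i \<in> borel_measurable P"
              "\<forall>i. Minf i \<in> borel_measurable P \<and> Yinf i \<in> borel_measurable P"
    and law_fin: "\<forall>N. distr P (PiM UNIV (\<lambda>_::nat. borel \<Otimes>\<^sub>M borel))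
                    (\<lambda>x i. (MN N (Suc i) x, YN N (Suc i) x))
               = distr (PiM UNIV (\<lambda>_::nat. D)) (PiM UNIV (\<lambda>_::nat. borel \<Otimes>\<^sub>M borel))
                    (\<lambda>\<omega> i. disorder_config b N \<omega> (Suc i))"
    and law_inf: "distr P (PiM UNIV (\<lambda>_::nat. borel \<Otimes>\<^sub>M borel))
                    (\<lambda>x i. (Minf (Suc i) x, Yinf (Suc i) x))
               = distr (PiM UNIV (\<lambda>_::nat. exp1_law) \<Otimes>\<^sub>M PiM UNIV (\<lambda>_::nat. unif01_law))
                    (PiM UNIV (\<lambda>_::nat. borel \<Otimes>\<^sub>M borel))
                    (\<lambda>eu i. continuum_config \<alpha> eu (Suc i))"
    and coupling: "AE x in P. \<forall>i\<ge>1. (\<lambda>N. MN N i x) \<longlonglongrightarrow> Minf i x \<and>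
                                    (\<lambda>N. YN N i x) \<longlonglongrightarrow> Yinf i x"
    and beta: "0 < \<beta>" "\<beta>N \<longlonglongrightarrow> \<beta>"
  shows "\<forall>\<delta>>0. \<forall>k::nat. \<exists>Nk. \<forall>N>Nk.
           measure P {x \<in> space P. \<exists>A.
               unique_maximizer \<gamma> (\<beta>N N) (min (N - 1) k) (\<lambda>i. MN N i x) (\<lambda>i. YN N i x) A \<and>
               unique_maximizer \<gamma> \<beta> k (\<lambda>i. Minf i x) (\<lambda>i. Yinf i x) A} > 1 - \<delta>"
proof (intro allI impI)
  fix \<delta> :: real and k :: nat
  assume \<delta>: "\<delta> > 0"
  interpret P: prob_space P by (rule P)
  define E where "E N = {x \<in> space P. \<exists>A.
      unique_maximizer \<gamma> (\<beta>N N) (min (N - 1) k) (\<lambda>i. MN N i x) (\<lambda>i. YN N i x) A \<and>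
      unique_maximizer \<gamma> \<beta> k (\<lambda>i. Minf i x) (\<lambda>i. Yinf i x) A}" for N
  have E_sets: "E N \<in> P.events" for N
    unfolding E_def using meas by (intro common_unique_maximizer_sets) auto
  have "AE x in P. nondegenerate \<gamma> \<beta> k (\<lambda>i. Minf i x) (\<lambda>i. Yinf i x)"
    using meas(2) law_inf alpha beta by (intro nondegenerate_AE_of_law) auto
  then have "AE x in P. eventually (\<lambda>N. x \<in> E N) sequentially"
    using coupling AE_space
  proof eventually_elim
    case (elim x)
    then show ?case
      using eventually_common_unique_maximizer[of \<gamma> \<beta> k _ _ "\<lambda>N i. MN N i x" "\<lambda>N i. YN N i x"] beta(2)
      by (auto simp: E_def)
  qed
  then have "(\<lambda>N. P.prob (E N)) \<longlonglongrightarrow> 1"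
    using E_sets by (intro P.measure_tendsto_one_if_AE_eventually)
  then have "eventually (\<lambda>N. 1 - \<delta> < P.prob (E N)) sequentially"
    using \<delta> by (intro order_tendstoD(1)) auto
  then show "\<exists>Nk. \<forall>N>Nk. P.prob (E N) > 1 - \<delta>"
    by (auto simp: eventually_sequentially intro: less_imp_le)
qed

end
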